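(* Let $N_1, N_2$ be positive integers and consider the Markov chain $(Z^{(t)})_{t\ge 0}$ on $[0,1]$ defined by $Z^{(t)} = B_1^{(t)} (1 - B_2^{(t)}) Z^{(t-1)} + B_2^{(t)}$ for $t \geq 1$, where $B_1^{(t)} \sim \operatorname{Beta}(N_1,1)$ and $B_2^{(t)}\sim\operatorname{Beta}(1,N_2)$, $t=1,2,\dots$, are all mutually independent and independent of $Z^{(0)}$. Let $P$ be its transition kernel and let $\pi = \operatorname{Beta}(N_1+1, N_2)$ (the stationary distribution of $P$). Then for every integer $t \ge 0$, \[\sup_{z\in[0,1]}\mathcal W_1 (P^t(z, \cdot), \pi) = \frac{\max\{N_1+1, N_2\}}{N_1 + N_2 + 1} \bigg(\frac{N_1 N_2 }{(N_1 +1)(N_2 + 1)}\bigg)^t.\]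
   Context: $\operatorname{Beta}(a,b)$ denotes the Beta distribution on $[0,1]$ with density proportional to $x^{a-1}(1-x)^{b-1}$. $\mathcal W_1$ denotes the Wasserstein-1 distance between probability measures on $[0,1]$ (with the usual metric $|x-y|$). $P^t(z,\cdot)$ is the law of $Z^{(t)}$ when $Z^{(0)} = z$. *)

theory Defs
  imports "HOL-Probability.Probability"
begin

definition beta_density :: "real \<Rightarrow> real \<Rightarrow> real \<Rightarrow> real" where
  "beta_density a b x =
     indicator {0<..<1} x * (x powr (a - 1) * (1 - x) powr (b - 1)) / Beta a b"

definition beta_measure :: "real \<Rightarrow> real \<Rightarrow> real measure" where
  "beta_measure a b = density lborel (\<lambda>x. ennreal (beta_density a b x))"

definition innov :: "nat \<Rightarrow> nat \<Rightarrow> (real \<times> real) measure" where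
  "innov N1 N2 = beta_measure (real N1) 1 \<Otimes>\<^sub>M beta_measure 1 (real N2)"

fun chain :: "real \<Rightarrow> nat \<Rightarrow> (nat \<Rightarrow> real \<times> real) \<Rightarrow> real" where
  "chain z 0 \<omega> = z"
| "chain z (Suc t) \<omega> =
     fst (\<omega> (Suc t)) * (1 - snd (\<omega> (Suc t))) * chain z t \<omega> + snd (\<omega> (Suc t))"

definition Pt :: "nat \<Rightarrow> nat \<Rightarrow> nat \<Rightarrow> real \<Rightarrow> real measure" where
  "Pt N1 N2 t z = distr (PiM {1..t} (\<lambda>_. innov N1 N2)) borel (chain z t)"

definition couplings :: "real measure \<Rightarrow> real measure \<Rightarrow> (real \<times> real) measure set" where
  "couplings \<mu> \<nu> = {\<gamma>. sets \<gamma> = sets (borel \<Otimes>\<^sub>M borel) \<and>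
                        distr \<gamma> borel fst = \<mu> \<and> distr \<gamma> borel snd = \<nu>}"

definition W1 :: "real measure \<Rightarrow> real measure \<Rightarrow> real" where
  "W1 \<mu> \<nu> = (INF \<gamma> \<in> couplings \<mu> \<nu>. \<integral>p. \<bar>fst p - snd p\<bar> \<partial>\<gamma>)"

end

theory Submission
  imports Defs
begin

text \<open>
  Drive two copies of the chain by the same innovations, one started at \<open>z\<close> and one at
  \<open>X \<sim> \<pi> = Beta(N\<^sub>1 + 1, N\<^sub>2)\<close>, which is stationary. After \<open>t\<close> steps their difference is
  \<open>(\<Prod>\<^sub>i B\<^sub>1\<^sub>i (1 - B\<^sub>2\<^sub>i)) (z - X)\<close>, so this coupling costs \<open>E|z - X| \<rho>\<^sup>t\<close> with
  \<open>\<rho> = E[B\<^sub>1 (1 - B\<^sub>2)] = N\<^sub>1 N\<^sub>2 / ((N\<^sub>1 + 1) (N\<^sub>2 + 1))\<close>. As \<open>E|z - X|\<close> is convex in \<open>z\<close>,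
  it is largest at \<open>z = 0\<close> or \<open>z = 1\<close>, where it is \<open>(N\<^sub>1 + 1) / (N\<^sub>1 + N\<^sub>2 + 1)\<close> resp.
  \<open>N\<^sub>2 / (N\<^sub>1 + N\<^sub>2 + 1)\<close>. At these endpoints the difference has constant sign, so the cost
  equals the difference of the means of \<open>P\<^sup>t(z, \<cdot>)\<close> and \<open>\<pi>\<close>, which is a lower bound for the
  cost of every coupling.
\<close>

lemma Beta_real_pos: "a > 0 \<Longrightarrow> b > 0 \<Longrightarrow> Beta a b > (0::real)"
  by (simp add: Beta_def)

lemma Beta_real_1_right:
  assumes "a > 0" shows "Beta a 1 = 1 / (a::real)"
proof -
  have "a \<notin> \<int>\<^sub>\<le>\<^sub>0" using assms by (auto elim!: nonpos_Ints_cases)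
  moreover have "Gamma a \<noteq> 0" using Gamma_real_pos[OF assms] by linarith
  ultimately show ?thesis using Gamma_plus1[of a] by (simp add: Beta_def)
qed

lemma Beta_plus1_left_eq_plus1_right:
  fixes a b :: real assumes "a > 0" "b > 0"
  shows "b * Beta (a + 1) b = a * Beta a (b + 1)"
proof -
  have "a \<notin> \<int>\<^sub>\<le>\<^sub>0" "b \<notin> \<int>\<^sub>\<le>\<^sub>0" using assms by (auto elim!: nonpos_Ints_cases)
  then have "(a + b) * (b * Beta (a + 1) b) = (a + b) * (a * Beta a (b + 1))"
    using Beta_plus1_left[of a b] Beta_plus1_right[of b a] by (simp add: algebra_simps)
  then show ?thesis using assms by simp
qed

lemma beta_density_borel_measurable [measurable]: "beta_density a b \<in> borel_measurable borel"
  unfolding beta_density_def by measurable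

lemma sets_beta_measure [simp, measurable_cong]: "sets (beta_measure a b) = sets borel"
  by (simp add: beta_measure_def)

lemma space_beta_measure [simp]: "space (beta_measure a b) = UNIV"
  by (simp add: beta_measure_def)

lemma nn_integral_beta_measure:
  "f \<in> borel_measurable borel \<Longrightarrow>
    (\<integral>\<^sup>+x. f x \<partial>beta_measure a b) = (\<integral>\<^sup>+x. ennreal (beta_density a b x) * f x \<partial>lborel)"
  unfolding beta_measure_def by (rule nn_integral_density) auto

lemma emeasure_beta_measure:
  "A \<in> sets borel \<Longrightarrow>
    emeasure (beta_measure a b) A = (\<integral>\<^sup>+x. ennreal (beta_density a b x) * indicator A x \<partial>lborel)"
  unfolding beta_measure_def by (simp add: emeasure_density nn_integral_set_ennreal mult.commute)

lemma nn_integral_lborel_has_integral_Icc: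
  fixes f :: "real \<Rightarrow> real"
  assumes "(f has_integral I) {lo..hi}" and "\<And>x. x \<in> {lo..hi} \<Longrightarrow> 0 \<le> f x"
    and "finite S" and "\<And>x. x \<notin> S \<Longrightarrow> g x = ennreal (f x) * indicator {lo..hi} x"
  shows "integral\<^sup>N lborel g = ennreal I"
proof -
  have "integral\<^sup>N lborel g = (\<integral>\<^sup>+x. ennreal (f x) * indicator {lo..hi} x \<partial>lborel)"
    using AE_not_in[OF countable_imp_null_set_lborel[OF countable_finite[OF assms(3)]]]
    by (intro nn_integral_cong_AE) (auto elim!: eventually_mono simp: assms(4))
  also have "\<dots> = ennreal I"
    using assms(1,2) by (rule nn_integral_has_integral_lebesgue'[rotated])
  finally show ?thesis .
qed

lemma prob_space_beta_measure:
  assumes "a > 0" "b > 0" shows "prob_space (beta_measure a b)"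
proof
  have "emeasure (beta_measure a b) UNIV =
      (\<integral>\<^sup>+x. ennreal (beta_density a b x) * indicator UNIV x \<partial>lborel)"
    by (rule emeasure_beta_measure) simp
  also have "\<dots> = ennreal (Beta a b / Beta a b)"
    using has_integral_divide[OF has_integral_Beta_real[OF assms], of "Beta a b"] Beta_real_pos[OF assms]
    by (intro nn_integral_lborel_has_integral_Icc[where S="{0,1}"])
       (auto simp: beta_density_def indicator_def)
  finally show "emeasure (beta_measure a b) (space (beta_measure a b)) = 1"
    using Beta_real_pos[OF assms] by simp
qed

lemma AE_beta_measure: "AE x in beta_measure a b. 0 < x \<and> x < 1"
  unfolding beta_measure_def by (subst AE_density) (auto simp: beta_density_def indicator_def)

lemma nn_integral_beta_measure_abs:
  assumes "a > 0" "b > 0"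
  shows "(\<integral>\<^sup>+x. ennreal \<bar>x\<bar> \<partial>beta_measure a b) = ennreal (a / (a + b))"
proof -
  have B: "Beta a b > 0" using Beta_real_pos[OF assms] .
  have "(\<integral>\<^sup>+x. ennreal \<bar>x\<bar> \<partial>beta_measure a b) =
      (\<integral>\<^sup>+x. ennreal (beta_density a b x) * ennreal \<bar>x\<bar> \<partial>lborel)"
    by (rule nn_integral_beta_measure) measurable
  also have "\<dots> = ennreal (Beta (a + 1) b / Beta a b)"
    using has_integral_divide[OF has_integral_Beta_real[of "a + 1" b], of "Beta a b"] assms B
    by (intro nn_integral_lborel_has_integral_Icc[where S="{0,1}"])
       (auto simp: beta_density_def indicator_def ennreal_mult[symmetric] powr_diff)
  also have "Beta (a + 1) b / Beta a b = a / (a + b)"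
  proof -
    have "a \<notin> \<int>\<^sub>\<le>\<^sub>0" using assms by (auto elim!: nonpos_Ints_cases)
    then show ?thesis using Beta_plus1_left[of a b] B assms by (simp add: field_simps)
  qed
  finally show ?thesis .
qed

lemma distr_lborel_one_minus: "distr lborel borel (\<lambda>x::real. 1 - x) = lborel"
proof -
  have "distr lborel borel (\<lambda>x::real. 1 - x) = distr (distr lborel borel uminus) borel ((+) (1::real))"
    by (subst distr_distr) (auto simp: comp_def)
  then show ?thesis by (simp add: lborel_distr_uminus lborel_distr_plus)
qed

lemma distr_beta_measure_one_minus:
  "distr (beta_measure a b) borel (\<lambda>x. 1 - x) = beta_measure b a"
proof -
  let ?T = "\<lambda>x::real. 1 - x"
  have "distr (beta_measure a b) borel ?T =
      distr (density (distr lborel borel ?T) (\<lambda>x. ennreal (beta_density a b x))) lborel ?T"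
    unfolding beta_measure_def distr_lborel_one_minus by (rule distr_cong) auto
  also have "\<dots> = density lborel ((\<lambda>x. ennreal (beta_density a b x)) \<circ> ?T)"
    by (rule distr_density_distr) auto
  also have "\<dots> = beta_measure b a"
    unfolding beta_measure_def
    by (rule density_cong) (auto simp: beta_density_def indicator_def Beta_commute[of b a] ac_simps)
  finally show ?thesis .
qed

lemma nn_integral_beta_measure_one_minus:
  assumes [measurable]: "f \<in> borel_measurable borel"
  shows "(\<integral>\<^sup>+x. f (1 - x) \<partial>beta_measure a b) = (\<integral>\<^sup>+x. f x \<partial>beta_measure b a)"
  by (subst distr_beta_measure_one_minus[symmetric, of b]) (simp add: nn_integral_distr)

lemma powr_of_nat_Suc_minus_1: "0 < x \<Longrightarrow> x powr (real (Suc n) - 1) = (x::real) ^ n"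
  by (simp add: powr_realpow)

lemma emeasure_beta_measure_Suc_1_atMost:
  "emeasure (beta_measure (Suc n) 1) {..w} = ennreal (min 1 (max 0 w) ^ Suc n)"
proof -
  let ?w = "min 1 (max 0 w)"
  have "((\<lambda>x. real (Suc n) * x ^ n) has_integral ?w ^ Suc n - 0 ^ Suc n) {0..?w}"
    using DERIV_pow[of "Suc n"]
    by (intro fundamental_theorem_of_calculus)
       (auto simp: has_real_derivative_iff_has_vector_derivative[symmetric] intro: has_field_derivative_at_within)
  then have "(\<integral>\<^sup>+x. ennreal (beta_density (Suc n) 1 x) * indicator {..w} x \<partial>lborel) =
      ennreal (?w ^ Suc n)"
    by (intro nn_integral_lborel_has_integral_Icc[where S="{0, ?w, 1}"])
       (auto simp: beta_density_def indicator_def Beta_real_1_right powr_of_nat_Suc_minus_1 simp del: of_nat_Suc)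
  then show ?thesis by (subst emeasure_beta_measure) auto
qed

lemma emeasure_beta_measure_Suc_atMost:
  fixes a b :: nat and s :: real
  assumes "0 \<le> s" "s \<le> 1"
  shows "emeasure (beta_measure (Suc a) (real b + 1)) {..s} =
    ennreal (integral {0..s} (\<lambda>v. v ^ a * (1 - v) ^ b) / Beta (Suc a) (real b + 1))"
proof -
  have "Beta (Suc a) (real b + 1) > 0" by (intro Beta_real_pos) auto
  have "((\<lambda>v. v ^ a * (1 - v) ^ b / Beta (Suc a) (real b + 1)) has_integral
      integral {0..s} (\<lambda>v. v ^ a * (1 - v) ^ b) / Beta (Suc a) (real b + 1)) {0..s}"
    by (intro has_integral_divide integrable_integral integrable_continuous_interval continuous_intros)
  then have "(\<integral>\<^sup>+v. ennreal (beta_density (Suc a) (real b + 1) v) * indicator {..s} v \<partial>lborel) =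
      ennreal (integral {0..s} (\<lambda>v. v ^ a * (1 - v) ^ b) / Beta (Suc a) (real b + 1))"
    by (rule nn_integral_lborel_has_integral_Icc[where S="{0, s, 1}"])
       (use assms \<open>Beta (Suc a) (real b + 1) > 0\<close> in \<open>auto simp: beta_density_def indicator_def
         powr_realpow powr_of_nat_Suc_minus_1 simp del: of_nat_Suc\<close>)
  then show ?thesis by (subst emeasure_beta_measure) auto
qed

lemma emeasure_distr_mult_atMost:
  fixes M N :: "real measure"
  assumes "prob_space M" "prob_space N"
    and sets_M: "sets M = sets borel" and sets_N: "sets N = sets borel"
    and pos: "AE v in N. 0 < v"
  shows "emeasure (distr (M \<Otimes>\<^sub>M N) borel (\<lambda>p. fst p * snd p)) {..s} =
    (\<integral>\<^sup>+v. emeasure M {..s / v} \<partial>N)"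
proof -
  interpret M: prob_space M by fact
  interpret N: prob_space N by fact
  interpret pair_prob_space M N ..
  note [measurable_cong] = sets_M sets_N
  let ?E = "(\<lambda>p. fst p * snd p) -` {..s} \<inter> space (M \<Otimes>\<^sub>M N)"
  have slice: "(\<lambda>x. (x, v)) -` ?E = {..s / v}" if "0 < v" for v
    using that sets_eq_imp_space_eq[OF sets_M] sets_eq_imp_space_eq[OF sets_N]
    by (auto simp: space_pair_measure pos_le_divide_eq)
  have "emeasure (distr (M \<Otimes>\<^sub>M N) borel (\<lambda>p. fst p * snd p)) {..s} = emeasure (M \<Otimes>\<^sub>M N) ?E"
    by (rule emeasure_distr) measurable
  also have "\<dots> = (\<integral>\<^sup>+v. emeasure M ((\<lambda>x. (x, v)) -` ?E) \<partial>N)"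
    by (rule emeasure_pair_measure_alt2) measurable
  also have "\<dots> = (\<integral>\<^sup>+v. emeasure M {..s / v} \<partial>N)"
    by (intro nn_integral_cong_AE eventually_mono[OF pos]) (simp only: slice)
  finally show ?thesis .
qed

lemma has_integral_min_pow_times_pow:
  fixes a c :: nat and s :: real
  assumes "0 \<le> s" "s \<le> 1"
  shows "((\<lambda>v. min s v ^ Suc a * (1 - v) ^ c) has_integral
           real (Suc a) / real (Suc c) * integral {0..s} (\<lambda>v. v ^ a * (1 - v) ^ Suc c)) {0..1}"
proof -
  define I where "I = integral {0..s} (\<lambda>v. v ^ a * (1 - v) ^ Suc c)"
  define G where "G v = v ^ Suc a * (1 - v) ^ Suc c" for v :: real
  have I: "((\<lambda>v. v ^ a * (1 - v) ^ Suc c) has_integral I) {0..s}"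
    unfolding I_def by (intro integrable_integral integrable_continuous_interval continuous_intros)
  have G: "((\<lambda>v. Suc a * v ^ a * (1 - v) ^ Suc c - Suc c * v ^ Suc a * (1 - v) ^ c)
      has_integral G s - G 0) {0..s}"
    unfolding G_def using assms
    by (intro fundamental_theorem_of_calculus)
       (auto intro!: derivative_eq_intros simp: has_real_derivative_iff_has_vector_derivative[symmetric]
         algebra_simps simp del: power_Suc of_nat_Suc)
  have G0: "G s - G 0 = G s" by (simp add: G_def)
  have "((\<lambda>v. (Suc a * (v ^ a * (1 - v) ^ Suc c)
         - (Suc a * v ^ a * (1 - v) ^ Suc c - Suc c * v ^ Suc a * (1 - v) ^ c)) / Suc c)
      has_integral (Suc a * I - G s) / Suc c) {0..s}"
    by (intro has_integral_divide has_integral_diff has_integral_mult_right I G[unfolded G0])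
  then have head: "((\<lambda>v. min s v ^ Suc a * (1 - v) ^ c) has_integral (Suc a * I - G s) / Suc c) {0..s}"
    by (rule has_integral_eq[rotated]) (auto simp: G_def min_def field_simps simp del: of_nat_Suc)
  define F where "F v = - (s ^ Suc a * (1 - v) ^ Suc c) / Suc c" for v :: real
  have "((\<lambda>v. s ^ Suc a * (1 - v) ^ c) has_integral F 1 - F s) {s..1}"
    unfolding F_def using assms
    by (intro fundamental_theorem_of_calculus)
       (auto intro!: derivative_eq_intros simp: has_real_derivative_iff_has_vector_derivative[symmetric]
         field_simps simp del: power_Suc of_nat_Suc)
  moreover have "F 1 - F s = G s / Suc c" by (simp add: F_def G_def)
  ultimately have "((\<lambda>v. s ^ Suc a * (1 - v) ^ c) has_integral G s / Suc c) {s..1}" by simp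
  then have tail: "((\<lambda>v. min s v ^ Suc a * (1 - v) ^ c) has_integral G s / Suc c) {s..1}"
    by (rule has_integral_eq[rotated]) (auto simp: G_def min_def)
  have "(Suc a * I - G s) / Suc c + G s / Suc c = Suc a / Suc c * I"
    by (simp add: diff_divide_distrib)
  with has_integral_combine[OF assms head tail] show ?thesis
    unfolding I_def by (simp only:)
qed

text \<open>Conditioning on \<open>V \<sim> Beta(a + 2, c + 1)\<close>, the left-hand side is \<open>P(U V \<le> s)\<close> for
  \<open>U \<sim> Beta(a + 1, 1)\<close>.\<close>

lemma nn_integral_beta_measure_clamp_pow:
  fixes a c :: nat and s :: real
  assumes "0 \<le> s" "s \<le> 1"
  shows "(\<integral>\<^sup>+v. ennreal (min 1 (max 0 (s / v)) ^ Suc a) \<partial>beta_measure (real (Suc a) + 1) (Suc c)) =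
    emeasure (beta_measure (Suc a) (real (Suc c) + 1)) {..s}"
proof -
  define I where "I = integral {0..s} (\<lambda>v. v ^ a * (1 - v) ^ Suc c)"
  define B' where "B' = Beta (real (Suc a) + 1) (Suc c)"
  define B'' where "B'' = Beta (Suc a) (real (Suc c) + 1)"
  have "B' > 0" "B'' > 0" unfolding B'_def B''_def by (auto intro!: Beta_real_pos)
  have density: "ennreal (beta_density (real (Suc a) + 1) (Suc c) v) * ennreal (min 1 (max 0 (s / v)) ^ Suc a) =
      ennreal (min s v ^ Suc a * (1 - v) ^ c / B') * indicator {0..1} v" if "v \<notin> {0, 1}" for v
  proof (cases "0 < v \<and> v < 1")
    case True
    then have "v * min 1 (max 0 (s / v)) = min s v"
      using assms by (auto simp: min_def max_def field_simps)
    then have prod: "v ^ Suc a * (1 - v) ^ c / B' * min 1 (max 0 (s / v)) ^ Suc a =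
        min s v ^ Suc a * (1 - v) ^ c / B'"
      by (metis power_mult_distrib mult.assoc mult.commute times_divide_eq_left)
    have dens: "beta_density (real (Suc a) + 1) (Suc c) v = v ^ Suc a * (1 - v) ^ c / B'"
      using True by (simp add: beta_density_def B'_def powr_realpow powr_of_nat_Suc_minus_1 del: of_nat_Suc)
    have "ennreal (beta_density (real (Suc a) + 1) (Suc c) v) * ennreal (min 1 (max 0 (s / v)) ^ Suc a) =
        ennreal (beta_density (real (Suc a) + 1) (Suc c) v * min 1 (max 0 (s / v)) ^ Suc a)"
      by (rule ennreal_mult''[symmetric]) simp
    also have "\<dots> = ennreal (min s v ^ Suc a * (1 - v) ^ c / B')"
      by (simp only: dens prod)
    finally show ?thesis using True by simp
  qed (use that in \<open>auto simp: beta_density_def\<close>)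
  have "(\<integral>\<^sup>+v. ennreal (min 1 (max 0 (s / v)) ^ Suc a) \<partial>beta_measure (real (Suc a) + 1) (Suc c)) =
      (\<integral>\<^sup>+v. ennreal (beta_density (real (Suc a) + 1) (Suc c) v) * ennreal (min 1 (max 0 (s / v)) ^ Suc a) \<partial>lborel)"
    by (rule nn_integral_beta_measure) measurable
  also have "\<dots> = ennreal (Suc a / Suc c * I / B')"
  proof (rule nn_integral_lborel_has_integral_Icc[where S="{0,1}"])
    show "((\<lambda>v. min s v ^ Suc a * (1 - v) ^ c / B') has_integral Suc a / Suc c * I / B') {0..1}"
      unfolding I_def by (intro has_integral_divide has_integral_min_pow_times_pow assms)
  qed (use assms \<open>B' > 0\<close> density in auto)
  also have "Suc a / Suc c * I / B' = I / B''"
  proof -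
    have "real (Suc c) * B' = real (Suc a) * B''"
      unfolding B'_def B''_def by (rule Beta_plus1_left_eq_plus1_right) auto
    then show ?thesis
      using \<open>B' > 0\<close> \<open>B'' > 0\<close> by (simp add: divide_simps ac_simps del: of_nat_Suc)
  qed
  also have "ennreal (I / B'') = emeasure (beta_measure (Suc a) (real (Suc c) + 1)) {..s}"
    unfolding I_def B''_def by (rule emeasure_beta_measure_Suc_atMost[OF assms, symmetric])
  finally show ?thesis .
qed

lemma distr_beta_measure_mult:
  fixes m n :: nat
  assumes "0 < m" "0 < n"
  shows "distr (beta_measure m 1 \<Otimes>\<^sub>M beta_measure (real m + 1) n) borel (\<lambda>p. fst p * snd p) =
    beta_measure m (real n + 1)"
    (is "?D = ?T")
proof (rule cdf_unique)
  let ?U = "beta_measure m 1" and ?V = "beta_measure (real m + 1) n"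
  have U: "prob_space ?U" and V: "prob_space ?V" and T: "prob_space ?T"
    using assms by (auto intro!: prob_space_beta_measure)
  show "real_distribution ?D"
    by (intro prob_space.real_distribution_distr prob_space_pair U V) measurable
  show "real_distribution ?T"
    using T by (simp add: real_distribution_def real_distribution_axioms_def)
  have "emeasure ?D {..s} = emeasure ?T {..s}" for s
  proof -
    obtain a c where m: "m = Suc a" and n: "n = Suc c" using assms gr0_implies_Suc by metis
    have "AE v in ?V. 0 < v"
      using AE_beta_measure[of "real m + 1" n] by (auto elim!: eventually_mono)
    then have D: "emeasure ?D {..s} = (\<integral>\<^sup>+v. ennreal (min 1 (max 0 (s / v)) ^ m) \<partial>?V)"
      using emeasure_distr_mult_atMost[OF U V sets_beta_measure sets_beta_measure]
      by (simp only: m emeasure_beta_measure_Suc_1_atMost)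
    consider "s < 0" | "0 \<le> s" "s \<le> 1" | "1 < s" by linarith
    then show ?thesis
    proof cases
      case 1
      have "(\<integral>\<^sup>+v. ennreal (min 1 (max 0 (s / v)) ^ m) \<partial>?V) = (\<integral>\<^sup>+v. 0 \<partial>?V)"
        using 1 assms by (intro nn_integral_cong_AE eventually_mono[OF AE_beta_measure])
          (auto simp: divide_neg_pos)
      moreover have "emeasure ?T {..s} = emeasure ?T {}"
        using 1 by (intro emeasure_eq_AE eventually_mono[OF AE_beta_measure]) auto
      ultimately show ?thesis by (simp add: D)
    next
      case 2
      then show ?thesis unfolding D unfolding m n by (rule nn_integral_beta_measure_clamp_pow)
    next
      case 3
      have "(\<integral>\<^sup>+v. ennreal (min 1 (max 0 (s / v)) ^ m) \<partial>?V) = (\<integral>\<^sup>+v. 1 \<partial>?V)"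
        using 3 by (intro nn_integral_cong_AE eventually_mono[OF AE_beta_measure])
          (auto simp: min_def max_def le_divide_eq)
      moreover have "emeasure ?T {..s} = emeasure ?T UNIV"
        using 3 by (intro emeasure_eq_AE eventually_mono[OF AE_beta_measure]) auto
      ultimately show ?thesis
        using prob_space.emeasure_space_1[OF V] prob_space.emeasure_space_1[OF T] by (simp add: D)
    qed
  qed
  then show "cdf ?D = cdf ?T" by (simp add: cdf_def measure_def)
qed

lemma nn_integral_beta_measure_mult:
  fixes m n :: nat
  assumes "0 < m" "0 < n" and [measurable]: "g \<in> borel_measurable borel"
  shows "(\<integral>\<^sup>+u. \<integral>\<^sup>+v. g (u * v) \<partial>beta_measure (real m + 1) n \<partial>beta_measure m 1) =
    (\<integral>\<^sup>+x. g x \<partial>beta_measure m (real n + 1))"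
proof -
  interpret V: prob_space "beta_measure (real m + 1) n"
    using assms by (intro prob_space_beta_measure) auto
  have "(\<integral>\<^sup>+u. \<integral>\<^sup>+v. g (u * v) \<partial>beta_measure (real m + 1) n \<partial>beta_measure m 1) =
      (\<integral>\<^sup>+p. g (fst p * snd p) \<partial>(beta_measure m 1 \<Otimes>\<^sub>M beta_measure (real m + 1) n))"
    by (subst V.nn_integral_fst[symmetric]) auto
  also have "\<dots> = (\<integral>\<^sup>+x. g x \<partial>beta_measure m (real n + 1))"
    by (subst distr_beta_measure_mult[OF assms(1,2), symmetric]) (simp add: nn_integral_distr)
  finally show ?thesis .
qed

lemma sets_innov [measurable_cong]: "sets (innov N1 N2) = sets (borel \<Otimes>\<^sub>M borel)"
  unfolding innov_def by (rule sets_pair_measure_cong) auto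

lemma chain_fun_upd_after: "t < j \<Longrightarrow> chain z t (w(j := y)) = chain z t w"
  by (induction t) auto

lemma measurable_chain:
  assumes "{1..t} \<subseteq> J"
  shows "(\<lambda>p. chain (fst p) t (snd p)) \<in> borel_measurable (borel \<Otimes>\<^sub>M PiM J (\<lambda>_. innov N1 N2))"
  using assms
proof (induction t)
  case (Suc t)
  have "{1..t} \<subseteq> J" and "Suc t \<in> J" using Suc.prems by auto
  from \<open>{1..t} \<subseteq> J\<close> have [measurable]:
      "(\<lambda>p. chain (fst p) t (snd p)) \<in> borel_measurable (borel \<Otimes>\<^sub>M PiM J (\<lambda>_. innov N1 N2))"
    by (rule Suc.IH)
  show ?case using \<open>Suc t \<in> J\<close> by simp measurable
qed simp

lemma chain_diff:
  "chain x t w - chain z t w = (\<Prod>i\<in>{1..t}. fst (w i) * (1 - snd (w i))) * (x - z)"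
proof (induction t)
  case (Suc t)
  have "chain x (Suc t) w - chain z (Suc t) w =
      fst (w (Suc t)) * (1 - snd (w (Suc t))) * (chain x t w - chain z t w)"
    by (simp add: algebra_simps)
  then show ?case by (simp add: Suc.IH prod.nat_ivl_Suc')
qed simp

lemma chain_in_unit_interval:
  assumes "z \<in> {0..1}" and "\<forall>i\<in>{1..t}. w i \<in> {0..1} \<times> {0..1}"
  shows "chain z t w \<in> {0..1}"
  using assms(2)
proof (induction t)
  case (Suc t)
  obtain x y where w: "w (Suc t) = (x, y)" and "x \<in> {0..1}" "y \<in> {0..1}"
    using Suc.prems by fastforce
  moreover have "chain z t w \<in> {0..1}" using Suc by auto
  ultimately have "x * chain z t w \<in> {0..1}" by (auto intro: mult_le_one)
  then have "(1 - y) * (x * chain z t w) \<in> {0..1 - y}"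
    using \<open>y \<in> {0..1}\<close> by (auto intro: mult_left_le)
  then have "(1 - y) * (x * chain z t w) + y \<in> {0..1}"
    using \<open>y \<in> {0..1}\<close> by auto
  then show ?case using w by (simp add: ac_simps)
qed (use assms(1) in simp)

lemma W1_le_coupling_cost:
  assumes "\<gamma> \<in> couplings \<mu> \<nu>"
  shows "W1 \<mu> \<nu> \<le> (\<integral>p. \<bar>fst p - snd p\<bar> \<partial>\<gamma>)"
  unfolding W1_def by (rule cINF_lower[OF bdd_belowI[where m=0] assms]) auto

lemma abs_mean_diff_le_W1:
  assumes "couplings \<mu> \<nu> \<noteq> {}" and "integrable \<mu> (\<lambda>x. x)" and "integrable \<nu> (\<lambda>x. x)"
  shows "\<bar>(\<integral>x. x \<partial>\<mu>) - (\<integral>x. x \<partial>\<nu>)\<bar> \<le> W1 \<mu> \<nu>"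
  unfolding W1_def
proof (rule cINF_greatest[OF assms(1)])
  fix \<gamma> assume "\<gamma> \<in> couplings \<mu> \<nu>"
  then have sets: "sets \<gamma> = sets (borel \<Otimes>\<^sub>M borel)"
    and \<mu>: "\<mu> = distr \<gamma> borel fst" and \<nu>: "\<nu> = distr \<gamma> borel snd"
    by (auto simp: couplings_def)
  have fst: "fst \<in> borel_measurable \<gamma>" and snd: "snd \<in> borel_measurable \<gamma>"
    by (simp_all add: measurable_cong_sets[OF sets refl])
  have "integrable (distr \<gamma> borel fst) (\<lambda>x. x)" "integrable (distr \<gamma> borel snd) (\<lambda>x. x)"
    using assms(2,3) unfolding \<mu> \<nu> .
  then have "integrable \<gamma> fst" "integrable \<gamma> snd"
    using integrable_distr[OF fst] integrable_distr[OF snd] by auto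
  moreover have "(\<integral>x. x \<partial>\<mu>) = (\<integral>p. fst p \<partial>\<gamma>)" "(\<integral>x. x \<partial>\<nu>) = (\<integral>p. snd p \<partial>\<gamma>)"
    unfolding \<mu> \<nu> by (rule integral_distr[OF fst] integral_distr[OF snd]; simp)+
  ultimately have "\<bar>(\<integral>x. x \<partial>\<mu>) - (\<integral>x. x \<partial>\<nu>)\<bar> = \<bar>\<integral>p. fst p - snd p \<partial>\<gamma>\<bar>" by simp
  also have "\<dots> \<le> (\<integral>p. \<bar>fst p - snd p\<bar> \<partial>\<gamma>)"
    using integral_norm_bound[of \<gamma> "\<lambda>p. fst p - snd p"] by simp
  finally show "\<bar>(\<integral>x. x \<partial>\<mu>) - (\<integral>x. x \<partial>\<nu>)\<bar> \<le> (\<integral>p. \<bar>fst p - snd p\<bar> \<partial>\<gamma>)" .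
qed

lemma integral_abs_eq_abs_integral:
  fixes f :: "'a \<Rightarrow> real"
  assumes [measurable]: "f \<in> borel_measurable M"
    and "(AE x in M. 0 \<le> f x) \<or> (AE x in M. f x \<le> 0)"
  shows "(\<integral>x. \<bar>f x\<bar> \<partial>M) = \<bar>\<integral>x. f x \<partial>M\<bar>"
  using assms(2)
proof
  assume nonneg: "AE x in M. 0 \<le> f x"
  then have "(\<integral>x. \<bar>f x\<bar> \<partial>M) = (\<integral>x. f x \<partial>M)"
    by (intro integral_cong_AE) (auto elim!: eventually_mono)
  with integral_nonneg_AE[OF nonneg] show ?thesis by simp
next
  assume nonpos: "AE x in M. f x \<le> 0"
  then have "(\<integral>x. \<bar>f x\<bar> \<partial>M) = (\<integral>x. - f x \<partial>M)"
    by (intro integral_cong_AE) (auto elim!: eventually_mono)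
  moreover have "0 \<le> (\<integral>x. - f x \<partial>M)"
    using nonpos by (intro integral_nonneg_AE) (auto elim!: eventually_mono)
  ultimately show ?thesis by simp
qed

lemma integral_abs_diff_le_max_endpoints:
  fixes M :: "real measure"
  assumes "prob_space M" "sets M = sets borel" "AE x in M. x \<in> {0..1}" and "z \<in> {0..1}"
  shows "(\<integral>x. \<bar>z - x\<bar> \<partial>M) \<le> max (\<integral>x. \<bar>x\<bar> \<partial>M) (\<integral>x. \<bar>1 - x\<bar> \<partial>M)"
proof -
  interpret prob_space M by fact
  note [measurable_cong] = assms(2)
  have int: "integrable M (\<lambda>x. \<bar>c - x\<bar>)" if "c \<in> {0..1}" for c
    using that by (intro integrable_const_bound[where B=1] eventually_mono[OF assms(3)]) auto
  have int_comb: "integrable M (\<lambda>x. (1 - z) * \<bar>0 - x\<bar> + z * \<bar>1 - x\<bar>)"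
    using int[of 0] int[of 1] by auto
  have "(\<integral>x. \<bar>z - x\<bar> \<partial>M) \<le> (\<integral>x. (1 - z) * \<bar>0 - x\<bar> + z * \<bar>1 - x\<bar> \<partial>M)"
  proof (rule integral_mono_AE[OF int[OF assms(4)] int_comb])
    show "AE x in M. \<bar>z - x\<bar> \<le> (1 - z) * \<bar>0 - x\<bar> + z * \<bar>1 - x\<bar>"
      using assms(3)
    proof eventually_elim
      case (elim x)
      then show ?case
        using assms(4) mult_nonneg_nonneg[of z "1 - x"] mult_nonneg_nonneg[of x "1 - z"]
        by (cases "z \<le> x") (auto simp: algebra_simps)
    qed
  qed
  also have "\<dots> = (1 - z) * (\<integral>x. \<bar>x\<bar> \<partial>M) + z * (\<integral>x. \<bar>1 - x\<bar> \<partial>M)"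
    using int[of 0] int[of 1] by simp
  also have "\<dots> \<le> max (\<integral>x. \<bar>x\<bar> \<partial>M) (\<integral>x. \<bar>1 - x\<bar> \<partial>M)"
    using assms(4) by (auto intro: convex_bound_le)
  finally show ?thesis .
qed

locale beta_chain =
  fixes N1 N2 :: nat
  assumes N1_pos: "0 < N1" and N2_pos: "0 < N2"
begin

abbreviation stationary :: "real measure" where
  "stationary \<equiv> beta_measure (real N1 + 1) N2"

lemma prob_space_stationary: "prob_space stationary"
  using N1_pos N2_pos by (intro prob_space_beta_measure) auto

lemma prob_space_innov: "prob_space (innov N1 N2)"
  unfolding innov_def using N1_pos N2_pos by (intro prob_space_pair prob_space_beta_measure) auto

text \<open>With \<open>u, v\<close> for \<open>B\<^sub>1, B\<^sub>2\<close> the new state is \<open>1 - (1 - v) (1 - u x)\<close>. For \<open>x \<sim> \<pi>\<close> the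
  product law gives \<open>u x \<sim> Beta(N\<^sub>1, N\<^sub>2 + 1)\<close>, so \<open>1 - u x \<sim> Beta(N\<^sub>2 + 1, N\<^sub>1)\<close>; with
  \<open>1 - v \<sim> Beta(N\<^sub>2, 1)\<close> the product law gives \<open>Beta(N\<^sub>2, N\<^sub>1 + 1)\<close>, and reflecting once
  more gives \<open>\<pi>\<close>.\<close>

lemma stationary_step:
  assumes [measurable]: "g \<in> borel_measurable borel"
  shows "(\<integral>\<^sup>+x. \<integral>\<^sup>+b. g (fst b * (1 - snd b) * x + snd b) \<partial>innov N1 N2 \<partial>stationary) =
    (\<integral>\<^sup>+x. g x \<partial>stationary)"
proof -
  let ?B1 = "beta_measure N1 1" and ?B2 = "beta_measure 1 N2"
  interpret B1: prob_space ?B1 using N1_pos by (intro prob_space_beta_measure) auto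
  interpret B2: prob_space ?B2 using N2_pos by (intro prob_space_beta_measure) auto
  interpret pair_prob_space ?B1 ?B2 ..
  interpret S: prob_space stationary by (rule prob_space_stationary)
  interpret I: prob_space "innov N1 N2" by (rule prob_space_innov)
  interpret SI: pair_prob_space stationary "innov N1 N2" ..
  have inner_measurable: "(\<lambda>b. \<integral>\<^sup>+x. g (fst b * (1 - snd b) * x + snd b) \<partial>stationary) \<in> borel_measurable (?B1 \<Otimes>\<^sub>M ?B2)"
    by (rule S.borel_measurable_nn_integral) measurable
  have "(\<integral>\<^sup>+x. \<integral>\<^sup>+b. g (fst b * (1 - snd b) * x + snd b) \<partial>innov N1 N2 \<partial>stationary) =
      (\<integral>\<^sup>+b. \<integral>\<^sup>+x. g (fst b * (1 - snd b) * x + snd b) \<partial>stationary \<partial>innov N1 N2)"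
    by (rule SI.Fubini'[symmetric]) measurable
  also have "\<dots> = (\<integral>\<^sup>+v. \<integral>\<^sup>+u. \<integral>\<^sup>+x. g (u * (1 - v) * x + v) \<partial>stationary \<partial>?B1 \<partial>?B2)"
    unfolding innov_def by (subst nn_integral_snd[symmetric]) (fact inner_measurable, simp)
  also have "\<dots> = (\<integral>\<^sup>+v. \<integral>\<^sup>+u. \<integral>\<^sup>+x. g (1 - (1 - v) * (1 - u * x)) \<partial>stationary \<partial>?B1 \<partial>?B2)"
    by (simp add: algebra_simps)
  also have "\<dots> = (\<integral>\<^sup>+v. \<integral>\<^sup>+y. g (1 - (1 - v) * (1 - y)) \<partial>beta_measure N1 (real N2 + 1) \<partial>?B2)"
    using N1_pos N2_pos by (intro nn_integral_cong nn_integral_beta_measure_mult) auto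
  also have "\<dots> = (\<integral>\<^sup>+v. \<integral>\<^sup>+w. g (1 - (1 - v) * w) \<partial>beta_measure (real N2 + 1) N1 \<partial>?B2)"
    by (intro nn_integral_cong) (subst nn_integral_beta_measure_one_minus[symmetric]; simp)
  also have "\<dots> = (\<integral>\<^sup>+v. \<integral>\<^sup>+w. g (1 - v * w) \<partial>beta_measure (real N2 + 1) N1 \<partial>beta_measure N2 1)"
  proof -
    interpret R: prob_space "beta_measure (real N2 + 1) N1"
      using N1_pos by (intro prob_space_beta_measure) auto
    have "(\<lambda>v. \<integral>\<^sup>+w. g (1 - v * w) \<partial>beta_measure (real N2 + 1) N1) \<in> borel_measurable borel"
      by (rule R.borel_measurable_nn_integral) measurable
    then show ?thesis by (rule nn_integral_beta_measure_one_minus)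
  qed
  also have "\<dots> = (\<integral>\<^sup>+y. g (1 - y) \<partial>beta_measure N2 (real N1 + 1))"
    using N1_pos N2_pos by (intro nn_integral_beta_measure_mult) auto
  also have "\<dots> = (\<integral>\<^sup>+x. g x \<partial>stationary)"
    by (rule nn_integral_beta_measure_one_minus) simp
  finally show ?thesis .
qed

definition innovations :: "nat \<Rightarrow> (nat \<Rightarrow> real \<times> real) measure" where
  "innovations t = PiM {1..t} (\<lambda>_. innov N1 N2)"

lemma prob_space_innovations: "prob_space (innovations t)"
  unfolding innovations_def using prob_space_innov by (rule prob_space_PiM)

lemma measurable_chain_innovations [measurable]: "chain z t \<in> borel_measurable (innovations t)"
proof -
  have "(\<lambda>w. (z, w)) \<in> measurable (PiM {1..t} (\<lambda>_. innov N1 N2)) (borel \<Otimes>\<^sub>M PiM {1..t} (\<lambda>_. innov N1 N2))"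
    by measurable
  from measurable_compose[OF this measurable_chain[OF order_refl]] show ?thesis
    by (simp add: innovations_def)
qed

lemma AE_innov_unit_square: "AE b in innov N1 N2. b \<in> {0..1} \<times> {0..1}"
proof -
  interpret B1: prob_space "beta_measure N1 1" using N1_pos by (intro prob_space_beta_measure) auto
  interpret B2: prob_space "beta_measure 1 N2" using N2_pos by (intro prob_space_beta_measure) auto
  interpret pair_prob_space "beta_measure N1 1" "beta_measure 1 N2" ..
  have "AE b in innov N1 N2. fst b \<in> {0..1} \<and> snd b \<in> {0..1}"
    unfolding innov_def
  proof (rule AE_pair_measure)
    show "{b \<in> space (beta_measure N1 1 \<Otimes>\<^sub>M beta_measure 1 N2). fst b \<in> {0..1} \<and> snd b \<in> {0..1}}
        \<in> sets (beta_measure N1 1 \<Otimes>\<^sub>M beta_measure 1 N2)"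
      by measurable
    show "AE x in beta_measure N1 1. AE y in beta_measure 1 N2. fst (x, y) \<in> {0..1} \<and> snd (x, y) \<in> {0..1}"
      using AE_beta_measure[of N1 1]
      by eventually_elim (use AE_beta_measure[of 1 N2] in \<open>auto elim: eventually_mono\<close>)
  qed
  then show ?thesis by (simp add: mem_Times_iff)
qed

lemma AE_innovations_unit_square: "AE w in innovations t. \<forall>i\<in>{1..t}. w i \<in> {0..1} \<times> {0..1}"
proof -
  interpret prob_space "innov N1 N2" by (rule prob_space_innov)
  interpret product_prob_space "\<lambda>_. innov N1 N2" "{1..t}" ..
  show ?thesis
    unfolding innovations_def by (subst AE_ball_countable) (auto intro!: AE_component AE_innov_unit_square)
qed

lemma nn_integral_stationary_chain:
  assumes "g \<in> borel_measurable borel"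
  shows "(\<integral>\<^sup>+x. \<integral>\<^sup>+w. g (chain x t w) \<partial>innovations t \<partial>stationary) = (\<integral>\<^sup>+x. g x \<partial>stationary)"
  using assms
proof (induction t arbitrary: g)
  case 0
  then show ?case
    using prob_space.emeasure_space_1[OF prob_space_innovations[of 0]] by simp
next
  case (Suc t)
  note [measurable] = Suc.prems
  interpret prob_space "innov N1 N2" by (rule prob_space_innov)
  interpret product_prob_space "\<lambda>_. innov N1 N2" UNIV ..
  define h where "h u = (\<integral>\<^sup>+b. g (fst b * (1 - snd b) * u + snd b) \<partial>innov N1 N2)" for u
  have [measurable]: "h \<in> borel_measurable borel" unfolding h_def by measurable
  have "(\<integral>\<^sup>+w. g (chain x (Suc t) w) \<partial>innovations (Suc t)) = (\<integral>\<^sup>+w. h (chain x t w) \<partial>innovations t)" for x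
  proof -
    have ins: "innovations (Suc t) = PiM (insert (Suc t) {1..t}) (\<lambda>_. innov N1 N2)"
      by (simp add: innovations_def atLeastAtMostSuc_conv)
    have "(\<lambda>w. g (chain x (Suc t) w)) \<in> borel_measurable (innovations (Suc t))" by measurable
    then show ?thesis
      unfolding ins by (simp add: product_nn_integral_insert chain_fun_upd_after h_def innovations_def)
  qed
  then have "(\<integral>\<^sup>+x. \<integral>\<^sup>+w. g (chain x (Suc t) w) \<partial>innovations (Suc t) \<partial>stationary) =
      (\<integral>\<^sup>+x. \<integral>\<^sup>+w. h (chain x t w) \<partial>innovations t \<partial>stationary)"
    by simp
  also have "\<dots> = (\<integral>\<^sup>+x. h x \<partial>stationary)" by (rule Suc.IH) measurable
  also have "\<dots> = (\<integral>\<^sup>+x. g x \<partial>stationary)" unfolding h_def by (rule stationary_step) measurable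
  finally show ?case .
qed

definition sync_space :: "nat \<Rightarrow> (real \<times> (nat \<Rightarrow> real \<times> real)) measure" where
  "sync_space t = stationary \<Otimes>\<^sub>M innovations t"

definition sync_coupling :: "nat \<Rightarrow> real \<Rightarrow> (real \<times> real) measure" where
  "sync_coupling t z =
    distr (sync_space t) (borel \<Otimes>\<^sub>M borel) (\<lambda>q. (chain z t (snd q), chain (fst q) t (snd q)))"

lemma prob_space_sync_space: "prob_space (sync_space t)"
  unfolding sync_space_def by (rule prob_space_pair[OF prob_space_stationary prob_space_innovations])

lemma sets_sync_space [measurable_cong]: "sets (sync_space t) = sets (borel \<Otimes>\<^sub>M innovations t)"
  unfolding sync_space_def by (rule sets_pair_measure_cong) auto

lemma measurable_chain_sync_space [measurable]:
  "(\<lambda>q. chain (fst q) t (snd q)) \<in> borel_measurable (sync_space t)"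
  unfolding measurable_cong_sets[OF sets_sync_space refl] innovations_def
  by (rule measurable_chain) simp

lemma measurable_chain_start_sync_space [measurable]:
  "(\<lambda>q. chain z t (snd q)) \<in> borel_measurable (sync_space t)"
proof -
  have "snd \<in> sync_space t \<rightarrow>\<^sub>M innovations t"
    unfolding measurable_cong_sets[OF sets_sync_space refl] by (rule measurable_snd)
  then show ?thesis by (rule measurable_compose) (rule measurable_chain_innovations)
qed

lemma nn_integral_sync_space:
  assumes "f \<in> borel_measurable (sync_space t)"
  shows "(\<integral>\<^sup>+q. f q \<partial>sync_space t) = (\<integral>\<^sup>+x. \<integral>\<^sup>+w. f (x, w) \<partial>innovations t \<partial>stationary)"
proof -
  interpret prob_space "innovations t" by (rule prob_space_innovations)
  show ?thesis
    using assms unfolding sync_space_def by (rule nn_integral_fst[symmetric])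
qed

lemma distr_sync_space_stationary:
  "distr (sync_space t) borel (\<lambda>q. chain (fst q) t (snd q)) = stationary"
proof (rule measure_eqI)
  fix A :: "real set"
  assume "A \<in> sets (distr (sync_space t) borel (\<lambda>q. chain (fst q) t (snd q)))"
  then have [measurable]: "A \<in> sets borel" by simp
  have "emeasure (distr (sync_space t) borel (\<lambda>q. chain (fst q) t (snd q))) A =
      (\<integral>\<^sup>+x. indicator A x \<partial>distr (sync_space t) borel (\<lambda>q. chain (fst q) t (snd q)))"
    by simp
  also have "\<dots> = (\<integral>\<^sup>+q. indicator A (chain (fst q) t (snd q)) \<partial>sync_space t)"
    by (rule nn_integral_distr) auto
  also have "\<dots> = (\<integral>\<^sup>+x. \<integral>\<^sup>+w. indicator A (chain x t w) \<partial>innovations t \<partial>stationary)"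
    by (simp add: nn_integral_sync_space)
  also have "\<dots> = emeasure stationary A"
    by (simp add: nn_integral_stationary_chain)
  finally show "emeasure (distr (sync_space t) borel (\<lambda>q. chain (fst q) t (snd q))) A = emeasure stationary A" .
qed simp

lemma distr_sync_space_start: "distr (sync_space t) borel (\<lambda>q. chain z t (snd q)) = Pt N1 N2 t z"
proof -
  interpret S: prob_space stationary by (rule prob_space_stationary)
  interpret I: prob_space "innovations t" by (rule prob_space_innovations)
  have "distr (sync_space t) (innovations t) snd = innovations t"
  proof (rule measure_eqI)
    fix A assume "A \<in> sets (distr (sync_space t) (innovations t) snd)"
    then have A: "A \<in> sets (innovations t)" by simp
    then have "emeasure (distr (sync_space t) (innovations t) snd) A = emeasure (sync_space t) (UNIV \<times> A)"
      by (subst emeasure_distr) (auto simp: sync_space_def space_pair_measure dest: sets.sets_into_space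
          intro!: arg_cong[where f="emeasure _"])
    also have "\<dots> = emeasure (innovations t) A"
      unfolding sync_space_def using A S.emeasure_space_1
      by (subst I.emeasure_pair_measure_Times) auto
    finally show "emeasure (distr (sync_space t) (innovations t) snd) A = emeasure (innovations t) A" .
  qed simp
  moreover have "distr (sync_space t) borel (\<lambda>q. chain z t (snd q)) =
      distr (distr (sync_space t) (innovations t) snd) borel (chain z t)"
    by (subst distr_distr) (auto simp: comp_def)
  ultimately show ?thesis by (simp add: Pt_def innovations_def)
qed

lemma sync_coupling_in_couplings: "sync_coupling t z \<in> couplings (Pt N1 N2 t z) stationary"
proof -
  have [measurable]: "(\<lambda>q. (chain z t (snd q), chain (fst q) t (snd q))) \<in> sync_space t \<rightarrow>\<^sub>M borel \<Otimes>\<^sub>M borel"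
    by measurable
  show ?thesis
    unfolding couplings_def sync_coupling_def
    by (simp add: distr_distr comp_def distr_sync_space_start distr_sync_space_stationary)
qed

definition contraction :: real where
  "contraction = real (N1 * N2) / real ((N1 + 1) * (N2 + 1))"

lemma nn_integral_innov_contraction:
  "(\<integral>\<^sup>+b. ennreal \<bar>fst b * (1 - snd b)\<bar> \<partial>innov N1 N2) = ennreal contraction"
proof -
  interpret B2: prob_space "beta_measure 1 N2" using N2_pos by (intro prob_space_beta_measure) auto
  have mean1: "(\<integral>\<^sup>+x. ennreal \<bar>x\<bar> \<partial>beta_measure N1 1) = ennreal (N1 / (N1 + 1))"
    using N1_pos by (simp add: nn_integral_beta_measure_abs)
  have "(\<integral>\<^sup>+y. ennreal \<bar>1 - y\<bar> \<partial>beta_measure 1 N2) = (\<integral>\<^sup>+y. ennreal \<bar>y\<bar> \<partial>beta_measure N2 1)"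
    by (rule nn_integral_beta_measure_one_minus[where f="\<lambda>y. ennreal \<bar>y\<bar>"]) simp
  also have "\<dots> = ennreal (N2 / (N2 + 1))"
    using N2_pos by (simp add: nn_integral_beta_measure_abs)
  finally have mean2: "(\<integral>\<^sup>+y. ennreal \<bar>1 - y\<bar> \<partial>beta_measure 1 N2) = ennreal (N2 / (N2 + 1))" .
  have "(\<integral>\<^sup>+b. ennreal \<bar>fst b * (1 - snd b)\<bar> \<partial>innov N1 N2) =
      (\<integral>\<^sup>+x. \<integral>\<^sup>+y. ennreal \<bar>x\<bar> * ennreal \<bar>1 - y\<bar> \<partial>beta_measure 1 N2 \<partial>beta_measure N1 1)"
    unfolding innov_def by (subst B2.nn_integral_fst[symmetric]) (auto simp: abs_mult ennreal_mult)
  also have "\<dots> = ennreal (N1 / (N1 + 1)) * ennreal (N2 / (N2 + 1))"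
    by (simp add: nn_integral_cmult nn_integral_multc mean1 mean2)
  also have "\<dots> = ennreal contraction"
    by (simp add: contraction_def ennreal_mult[symmetric]) (simp add: algebra_simps)
  finally show ?thesis .
qed

lemma nn_integral_sync_cost:
  "(\<integral>\<^sup>+q. ennreal \<bar>chain z t (snd q) - chain (fst q) t (snd q)\<bar> \<partial>sync_space t) =
    (\<integral>\<^sup>+x. ennreal \<bar>z - x\<bar> \<partial>stationary) * ennreal (contraction ^ t)"
proof -
  let ?k = "\<lambda>b::real \<times> real. ennreal \<bar>fst b * (1 - snd b)\<bar>"
  interpret prob_space "innov N1 N2" by (rule prob_space_innov)
  interpret product_prob_space "\<lambda>_. innov N1 N2" UNIV ..
  have [measurable]: "?k \<in> borel_measurable (innov N1 N2)" by measurable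
  have prod_meas [measurable]: "(\<lambda>w. \<Prod>i\<in>{1..t}. ?k (w i)) \<in> borel_measurable (innovations t)"
    unfolding innovations_def by measurable
  have factor: "ennreal \<bar>chain z t w - chain x t w\<bar> = ennreal \<bar>z - x\<bar> * (\<Prod>i\<in>{1..t}. ?k (w i))" for x w
    by (simp add: chain_diff abs_mult abs_prod prod_ennreal ennreal_mult[symmetric] prod_nonneg)
  have "(\<integral>\<^sup>+w. (\<Prod>i\<in>{1..t}. ?k (w i)) \<partial>innovations t) = (\<Prod>i\<in>{1..t}. integral\<^sup>N (innov N1 N2) ?k)"
    unfolding innovations_def by (rule product_nn_integral_prod) auto
  also have "\<dots> = ennreal (contraction ^ t)"
    by (simp add: nn_integral_innov_contraction ennreal_power contraction_def)
  finally have contract: "(\<integral>\<^sup>+w. (\<Prod>i\<in>{1..t}. ?k (w i)) \<partial>innovations t) = ennreal (contraction ^ t)" .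
  have [measurable]: "(\<lambda>q. ennreal \<bar>chain z t (snd q) - chain (fst q) t (snd q)\<bar>) \<in> borel_measurable (sync_space t)"
    by measurable
  have "(\<integral>\<^sup>+q. ennreal \<bar>chain z t (snd q) - chain (fst q) t (snd q)\<bar> \<partial>sync_space t) =
      (\<integral>\<^sup>+x. \<integral>\<^sup>+w. ennreal \<bar>chain z t w - chain x t w\<bar> \<partial>innovations t \<partial>stationary)"
    by (subst nn_integral_sync_space) simp_all
  also have "\<dots> = (\<integral>\<^sup>+x. \<integral>\<^sup>+w. ennreal \<bar>z - x\<bar> * (\<Prod>i\<in>{1..t}. ?k (w i)) \<partial>innovations t \<partial>stationary)"
    by (simp only: factor)
  also have "\<dots> = (\<integral>\<^sup>+x. ennreal \<bar>z - x\<bar> * ennreal (contraction ^ t) \<partial>stationary)"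
    by (intro nn_integral_cong) (simp only: nn_integral_cmult[OF prod_meas] contract)
  also have "\<dots> = (\<integral>\<^sup>+x. ennreal \<bar>z - x\<bar> \<partial>stationary) * ennreal (contraction ^ t)"
    by (rule nn_integral_multc) measurable
  finally show ?thesis .
qed

lemma sync_cost:
  "(\<integral>q. \<bar>chain z t (snd q) - chain (fst q) t (snd q)\<bar> \<partial>sync_space t) =
    (\<integral>x. \<bar>z - x\<bar> \<partial>stationary) * contraction ^ t"
  by (simp add: integral_eq_nn_integral nn_integral_sync_cost enn2real_mult contraction_def)

lemma AE_sync_space:
  "AE q in sync_space t. fst q \<in> {0..1} \<and> (\<forall>i\<in>{1..t}. snd q i \<in> {0..1} \<times> {0..1})"
proof -
  interpret S: prob_space stationary by (rule prob_space_stationary)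
  interpret I: prob_space "innovations t" by (rule prob_space_innovations)
  interpret pair_prob_space stationary "innovations t" ..
  show ?thesis
    unfolding sync_space_def
  proof (rule AE_pair_measure)
    show "{q \<in> space (stationary \<Otimes>\<^sub>M innovations t).
        fst q \<in> {0..1} \<and> (\<forall>i\<in>{1..t}. snd q i \<in> {0..1} \<times> {0..1})} \<in> sets (stationary \<Otimes>\<^sub>M innovations t)"
      unfolding innovations_def mem_Times_iff by measurable
    show "AE x in stationary. AE w in innovations t.
        fst (x, w) \<in> {0..1} \<and> (\<forall>i\<in>{1..t}. snd (x, w) i \<in> {0..1} \<times> {0..1})"
      using AE_beta_measure
      by eventually_elim (use AE_innovations_unit_square in \<open>auto elim: eventually_mono\<close>)
  qed
qed

lemma W1_Pt_le:
  "W1 (Pt N1 N2 t z) stationary \<le> (\<integral>x. \<bar>z - x\<bar> \<partial>stationary) * contraction ^ t"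
proof -
  have "W1 (Pt N1 N2 t z) stationary \<le> (\<integral>p. \<bar>fst p - snd p\<bar> \<partial>sync_coupling t z)"
    by (rule W1_le_coupling_cost[OF sync_coupling_in_couplings])
  also have "\<dots> = (\<integral>q. \<bar>chain z t (snd q) - chain (fst q) t (snd q)\<bar> \<partial>sync_space t)"
    unfolding sync_coupling_def by (subst integral_distr) auto
  also have "\<dots> = (\<integral>x. \<bar>z - x\<bar> \<partial>stationary) * contraction ^ t"
    by (rule sync_cost)
  finally show ?thesis .
qed

lemma integrable_chain_sync_space:
  assumes "z \<in> {0..1}"
  shows "integrable (sync_space t) (\<lambda>q. chain z t (snd q))"
    and "integrable (sync_space t) (\<lambda>q. chain (fst q) t (snd q))"
proof -
  interpret prob_space "sync_space t" by (rule prob_space_sync_space)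
  have unit: "AE q in sync_space t. chain z t (snd q) \<in> {0..1} \<and> chain (fst q) t (snd q) \<in> {0..1}"
    using AE_sync_space by eventually_elim (use assms in \<open>blast intro: chain_in_unit_interval\<close>)
  show "integrable (sync_space t) (\<lambda>q. chain z t (snd q))"
    and "integrable (sync_space t) (\<lambda>q. chain (fst q) t (snd q))"
    by (intro integrable_const_bound[where B=1] eventually_mono[OF unit]; force)+
qed

lemma AE_sync_gap_sign:
  assumes "z = 0 \<or> z = 1"
  shows "(AE q in sync_space t. 0 \<le> chain z t (snd q) - chain (fst q) t (snd q)) \<or>
    (AE q in sync_space t. chain z t (snd q) - chain (fst q) t (snd q) \<le> 0)"
proof -
  let ?P = "\<lambda>w. \<Prod>i\<in>{1..t}. fst (w i) * (1 - snd (w i))"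
  have gap: "AE q in sync_space t. chain z t (snd q) - chain (fst q) t (snd q) = ?P (snd q) * (z - fst q)
      \<and> 0 \<le> ?P (snd q) \<and> fst q \<in> {0..1}"
    using AE_sync_space by eventually_elim (auto simp: chain_diff intro!: prod_nonneg)
  from assms show ?thesis
  proof
    assume "z = 0"
    from gap have "AE q in sync_space t. chain z t (snd q) - chain (fst q) t (snd q) \<le> 0"
      by eventually_elim (use \<open>z = 0\<close> in \<open>auto simp: mult_nonneg_nonpos\<close>)
    then show ?thesis ..
  next
    assume "z = 1"
    from gap have "AE q in sync_space t. 0 \<le> chain z t (snd q) - chain (fst q) t (snd q)"
      by eventually_elim (use \<open>z = 1\<close> in auto)
    then show ?thesis ..
  qed
qed

lemma W1_Pt_ge_at_endpoints:
  assumes "z = 0 \<or> z = 1"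
  shows "(\<integral>x. \<bar>z - x\<bar> \<partial>stationary) * contraction ^ t \<le> W1 (Pt N1 N2 t z) stationary"
proof -
  let ?g1 = "\<lambda>q. chain z t (snd q)" and ?g2 = "\<lambda>q. chain (fst q) t (snd q)"
  have "z \<in> {0..1}" using assms by auto
  note int = integrable_chain_sync_space[OF this, of t]
  have "(\<integral>x. \<bar>z - x\<bar> \<partial>stationary) * contraction ^ t = (\<integral>q. \<bar>?g1 q - ?g2 q\<bar> \<partial>sync_space t)"
    by (rule sync_cost[symmetric])
  also have "\<dots> = \<bar>(\<integral>q. ?g1 q \<partial>sync_space t) - (\<integral>q. ?g2 q \<partial>sync_space t)\<bar>"
    using integral_abs_eq_abs_integral[OF _ AE_sync_gap_sign[OF assms]] int by simp
  also have "\<dots> = \<bar>(\<integral>x. x \<partial>Pt N1 N2 t z) - (\<integral>x. x \<partial>stationary)\<bar>"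
    by (simp add: integral_distr distr_sync_space_start[symmetric, of t z]
        distr_sync_space_stationary[symmetric, of t])
  also have "\<dots> \<le> W1 (Pt N1 N2 t z) stationary"
  proof (rule abs_mean_diff_le_W1)
    show "couplings (Pt N1 N2 t z) stationary \<noteq> {}" using sync_coupling_in_couplings by blast
    show "integrable (Pt N1 N2 t z) (\<lambda>x. x)" "integrable stationary (\<lambda>x. x)"
      using int by (simp_all add: integrable_distr_eq distr_sync_space_start[symmetric, of t z]
          distr_sync_space_stationary[symmetric, of t])
  qed
  finally show ?thesis .
qed

lemma integral_stationary_abs: "(\<integral>x. \<bar>x\<bar> \<partial>stationary) = real (N1 + 1) / real (N1 + N2 + 1)"
  using N2_pos by (simp add: integral_eq_nn_integral nn_integral_beta_measure_abs add_ac)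

lemma integral_stationary_abs_one_minus: "(\<integral>x. \<bar>1 - x\<bar> \<partial>stationary) = real N2 / real (N1 + N2 + 1)"
proof -
  have "(\<integral>\<^sup>+x. ennreal \<bar>1 - x\<bar> \<partial>stationary) = (\<integral>\<^sup>+x. ennreal \<bar>x\<bar> \<partial>beta_measure N2 (real N1 + 1))"
    by (rule nn_integral_beta_measure_one_minus[where f="\<lambda>x. ennreal \<bar>x\<bar>"]) simp
  then show ?thesis
    using N2_pos by (simp add: integral_eq_nn_integral nn_integral_beta_measure_abs add_ac)
qed

lemma W1_Pt_at_endpoints:
  "z = 0 \<or> z = 1 \<Longrightarrow> W1 (Pt N1 N2 t z) stationary = (\<integral>x. \<bar>z - x\<bar> \<partial>stationary) * contraction ^ t"
  by (rule antisym[OF W1_Pt_le W1_Pt_ge_at_endpoints])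

lemma SUP_W1_Pt:
  "(SUP z\<in>{0..1}. W1 (Pt N1 N2 t z) stationary) =
    max (\<integral>x. \<bar>x\<bar> \<partial>stationary) (\<integral>x. \<bar>1 - x\<bar> \<partial>stationary) * contraction ^ t"
proof (rule cSup_eq_maximum)
  have at_0: "W1 (Pt N1 N2 t 0) stationary = (\<integral>x. \<bar>x\<bar> \<partial>stationary) * contraction ^ t"
    using W1_Pt_at_endpoints[of 0 t] by simp
  have at_1: "W1 (Pt N1 N2 t 1) stationary = (\<integral>x. \<bar>1 - x\<bar> \<partial>stationary) * contraction ^ t"
    using W1_Pt_at_endpoints[of 1 t] by simp
  show "max (\<integral>x. \<bar>x\<bar> \<partial>stationary) (\<integral>x. \<bar>1 - x\<bar> \<partial>stationary) * contraction ^ t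
      \<in> (\<lambda>z. W1 (Pt N1 N2 t z) stationary) ` {0..1}"
  proof (cases "(\<integral>x. \<bar>1 - x\<bar> \<partial>stationary) \<le> (\<integral>x. \<bar>x\<bar> \<partial>stationary)")
    case True
    then show ?thesis using at_0 by (intro image_eqI[where x=0]) (auto simp: max_def)
  next
    case False
    then show ?thesis using at_1 by (intro image_eqI[where x=1]) (auto simp: max_def)
  qed
next
  fix w assume "w \<in> (\<lambda>z. W1 (Pt N1 N2 t z) stationary) ` {0..1}"
  then obtain z where "z \<in> {0..1}" and w: "w = W1 (Pt N1 N2 t z) stationary" by blast
  have "(\<integral>x. \<bar>z - x\<bar> \<partial>stationary) \<le> max (\<integral>x. \<bar>x\<bar> \<partial>stationary) (\<integral>x. \<bar>1 - x\<bar> \<partial>stationary)"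
    using prob_space_stationary \<open>z \<in> {0..1}\<close>
    by (intro integral_abs_diff_le_max_endpoints eventually_mono[OF AE_beta_measure]) auto
  then have "(\<integral>x. \<bar>z - x\<bar> \<partial>stationary) * contraction ^ t \<le>
      max (\<integral>x. \<bar>x\<bar> \<partial>stationary) (\<integral>x. \<bar>1 - x\<bar> \<partial>stationary) * contraction ^ t"
    by (rule mult_right_mono) (simp add: contraction_def)
  with W1_Pt_le show "w \<le> max (\<integral>x. \<bar>x\<bar> \<partial>stationary) (\<integral>x. \<bar>1 - x\<bar> \<partial>stationary) * contraction ^ t"
    unfolding w by (rule order_trans)
qed

end

theorem mainTheorem3:
  fixes N1 N2 t :: nat
  assumes "N1 > 0" and "N2 > 0"
  shows "(SUP z \<in> {0..1}. W1 (Pt N1 N2 t z) (beta_measure (real N1 + 1) (real N2)))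
         = real (max (N1 + 1) N2) / real (N1 + N2 + 1)
           * (real (N1 * N2) / real ((N1 + 1) * (N2 + 1))) ^ t"
proof -
  interpret beta_chain N1 N2 using assms by unfold_locales
  have "max (\<integral>x. \<bar>x\<bar> \<partial>stationary) (\<integral>x. \<bar>1 - x\<bar> \<partial>stationary) = real (max (N1 + 1) N2) / real (N1 + N2 + 1)"
    by (simp add: integral_stationary_abs integral_stationary_abs_one_minus max_divide_distrib_right of_nat_max)
  then show ?thesis by (simp add: SUP_W1_Pt contraction_def)
qed

end
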